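(* Let $(a_i)_{i\ge1}$ be a non-decreasing sequence of positive reals with $\sum_i a_i^{-2}<\infty$, let $\mu(\theta)=\sum_i(a_i^2+2\theta)^{-1}$, $\psi(\theta)=\big(\sum_i 2\theta^2(a_i^2+2\theta)^{-2}\big)^{1/2}$, and $\rho(s)=1/\mu^{-1}(s)$ for small $s>0$. Then for every $x\in\mathbb{R}$, \[ \lim_{s\downarrow0}\frac{\psi(\mu^{-1}(s))}{\psi(\mu^{-1}(s+x\rho(s)))}=1. \]
   Context: $\mu^{-1}$ denotes the inverse function of the strictly decreasing function $\mu$ on $(0,\infty)$. *)

theory Defs
  imports Complex_Main
begin

text \<open>Sequence a indexed by nat (index shift i = 0,1,... corresponds to i = 1,2,...).\<close>

definition mu :: "(nat \<Rightarrow> real) \<Rightarrow> real \<Rightarrow> real" where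
  "mu a \<theta> = (\<Sum>i. 1 / ((a i)\<^sup>2 + 2 * \<theta>))"

definition psi :: "(nat \<Rightarrow> real) \<Rightarrow> real \<Rightarrow> real" where
  "psi a \<theta> = sqrt (\<Sum>i. 2 * \<theta>\<^sup>2 / ((a i)\<^sup>2 + 2 * \<theta>)\<^sup>2)"

definition mu_inv :: "(nat \<Rightarrow> real) \<Rightarrow> real \<Rightarrow> real" where
  "mu_inv a s = inv_into {0<..} (mu a) s"

definition rho :: "(nat \<Rightarrow> real) \<Rightarrow> real \<Rightarrow> real" where
  "rho a s = 1 / mu_inv a s"

end

theory Submission
  imports Defs "HOL-Analysis.Lipschitz" "HOL-Analysis.Uniform_Limit"
begin

(*
  Write P(t) = psi(t)^2 = sum_i 2 t^2 / (a_i^2 + 2t)^2 and T = mu^-1(s),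
  T' = mu^-1(s + x rho(s)), so that mu(T') = mu(T) + x / T.
  (1) Term-by-term comparison of the series gives, for 0 <= u <= v,
        (v - u) P(v) <= v^2 (mu(u) - mu(v))   and   u (mu(u) - mu(v)) <= (v - u) mu(v),
      as well as: P is increasing, P(v) <= (v/u)^2 P(u), P(t) <= t mu(t), and P is unbounded.
  (2) Hence mu is a strictly decreasing, locally Lipschitz bijection from (0,oo) onto
      (0, mu(0)) with mu(t) -> 0, so mu^-1 is well defined near 0 and mu^-1(s) -> oo as
      s -> 0+; in particular P(T) -> oo.
  (3) The first inequality of (1) forces T and T' to be within a factor 1 + 4|x|/P(T) of
      each other once P(T) > 8|x|; by the two bounds on P this controls psi(T)/psi(T').
*)

definition psi_sq :: "(nat \<Rightarrow> real) \<Rightarrow> real \<Rightarrow> real" where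
  "psi_sq a \<theta> = (\<Sum>i. 2 * \<theta>\<^sup>2 / ((a i)\<^sup>2 + 2 * \<theta>)\<^sup>2)"

lemma psi_eq_sqrt_psi_sq: "psi a \<theta> = sqrt (psi_sq a \<theta>)"
  by (simp add: psi_def psi_sq_def)

lemma mu_term_diff_lower:
  fixes A u v :: real
  assumes "0 < A" "0 \<le> u" "u \<le> v"
  shows "(v - u) * (2 * v\<^sup>2 / (A + 2 * v)\<^sup>2) \<le> v\<^sup>2 * (1 / (A + 2 * u) - 1 / (A + 2 * v))"
proof -
  have "(v - u) * (2 * v\<^sup>2 / (A + 2 * v)\<^sup>2) = v\<^sup>2 * (2 * (v - u) / (A + 2 * v)\<^sup>2)"
    by simp
  also have "\<dots> \<le> v\<^sup>2 * (2 * (v - u) / ((A + 2 * u) * (A + 2 * v)))"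
    using assms by (intro mult_left_mono divide_left_mono)
      (auto simp: power2_eq_square intro!: mult_right_mono)
  also have "\<dots> = v\<^sup>2 * (1 / (A + 2 * u) - 1 / (A + 2 * v))"
    using assms by (simp add: field_simps)
  finally show ?thesis .
qed

lemma mu_term_diff_upper:
  fixes A u v :: real
  assumes "0 < A" "0 \<le> u" "u \<le> v"
  shows "u * (1 / (A + 2 * u) - 1 / (A + 2 * v)) \<le> (v - u) * (1 / (A + 2 * v))"
proof -
  have "u * (1 / (A + 2 * u) - 1 / (A + 2 * v)) = (v - u) * (1 / (A + 2 * v)) * (2 * u / (A + 2 * u))"
    using assms by (simp add: field_simps)
  also have "\<dots> \<le> (v - u) * (1 / (A + 2 * v)) * 1"
    using assms by (intro mult_left_mono) auto
  finally show ?thesis by simp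
qed

lemma psi_term_mono:
  fixes A u v :: real
  assumes "0 < A" "0 \<le> u" "u \<le> v"
  shows "2 * u\<^sup>2 / (A + 2 * u)\<^sup>2 \<le> 2 * v\<^sup>2 / (A + 2 * v)\<^sup>2"
proof -
  have "u * (A + 2 * v) \<le> v * (A + 2 * u)"
    using assms by (simp add: algebra_simps mult_right_mono)
  then have "u / (A + 2 * u) \<le> v / (A + 2 * v)"
    using assms by (simp add: divide_simps)
  then have "(u / (A + 2 * u))\<^sup>2 \<le> (v / (A + 2 * v))\<^sup>2"
    using assms by (intro power_mono) auto
  then show ?thesis by (simp add: power_divide)
qed

lemma psi_term_ratio:
  fixes A u v :: real
  assumes "0 < A" "0 < u" "u \<le> v"
  shows "2 * v\<^sup>2 / (A + 2 * v)\<^sup>2 \<le> (v / u)\<^sup>2 * (2 * u\<^sup>2 / (A + 2 * u)\<^sup>2)"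
proof -
  have "(A + 2 * u)\<^sup>2 \<le> (A + 2 * v)\<^sup>2"
    using assms by (intro power_mono) auto
  then have "2 * v\<^sup>2 / (A + 2 * v)\<^sup>2 \<le> 2 * v\<^sup>2 / (A + 2 * u)\<^sup>2"
    using assms by (intro divide_left_mono) auto
  also have "\<dots> = (v / u)\<^sup>2 * (2 * u\<^sup>2 / (A + 2 * u)\<^sup>2)"
    using assms by (simp add: field_simps)
  finally show ?thesis .
qed

lemma psi_term_le_mu_term:
  fixes A t :: real
  assumes "0 < A" "0 \<le> t"
  shows "2 * t\<^sup>2 / (A + 2 * t)\<^sup>2 \<le> t * (1 / (A + 2 * t))"
proof -
  have "2 * t\<^sup>2 / (A + 2 * t)\<^sup>2 = t * (1 / (A + 2 * t)) * (2 * t / (A + 2 * t))"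
    by (simp add: power2_eq_square)
  also have "\<dots> \<le> t * (1 / (A + 2 * t)) * 1"
    using assms by (intro mult_left_mono) auto
  finally show ?thesis by simp
qed

context
  fixes a :: "nat \<Rightarrow> real"
  assumes a_pos: "\<And>i. 0 < a i"
    and a_summable: "summable (\<lambda>i. 1 / (a i)\<^sup>2)"
begin

lemma a_sq_pos: "0 < (a i)\<^sup>2"
  using a_pos[of i] by simp

lemma denom_pos: "0 \<le> t \<Longrightarrow> 0 < (a i)\<^sup>2 + 2 * t"
  using a_sq_pos[of i] by linarith

lemma mu_term_le: "0 \<le> t \<Longrightarrow> 1 / ((a i)\<^sup>2 + 2 * t) \<le> 1 / (a i)\<^sup>2"
  using a_sq_pos[of i] denom_pos[of t i] by (simp add: frac_le)

text \<open>Both series converge for \<open>t \<ge> 0\<close>: the terms of \<open>mu\<close> are dominated by \<open>1 / a\<^sub>i\<^sup>2\<close>,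
  those of \<open>psi_sq\<close> by \<open>t\<close> times those of \<open>mu\<close>.\<close>

lemma summable_mu_terms: "0 \<le> t \<Longrightarrow> summable (\<lambda>i. 1 / ((a i)\<^sup>2 + 2 * t))"
  by (rule summable_comparison_test'[OF a_summable]) (simp add: mu_term_le less_imp_le denom_pos)

lemma summable_psi_terms:
  assumes "0 \<le> t"
  shows "summable (\<lambda>i. 2 * t\<^sup>2 / ((a i)\<^sup>2 + 2 * t)\<^sup>2)"
proof (rule summable_comparison_test'[OF summable_mult[OF summable_mu_terms[OF assms], of t]])
  fix i show "norm (2 * t\<^sup>2 / ((a i)\<^sup>2 + 2 * t)\<^sup>2) \<le> t * (1 / ((a i)\<^sup>2 + 2 * t))"
    using psi_term_le_mu_term[OF a_sq_pos assms] by simp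
qed

lemma mu_pos: "0 \<le> t \<Longrightarrow> 0 < mu a t"
  unfolding mu_def by (rule suminf_pos[OF summable_mu_terms]) (auto simp: denom_pos)

lemma psi_sq_pos: "0 < t \<Longrightarrow> 0 < psi_sq a t"
  unfolding psi_sq_def
proof (rule suminf_pos[OF summable_psi_terms])
  fix i assume "0 < t"
  then show "0 < 2 * t\<^sup>2 / ((a i)\<^sup>2 + 2 * t)\<^sup>2"
    using denom_pos[of t i] by (intro divide_pos_pos) auto
qed simp

text \<open>The two basic estimates for the decrease of \<open>mu\<close>; they play the role of the bounds
  \<open>-mu'(v) = psi_sq(v) / v\<^sup>2\<close> and \<open>-mu'(u) \<le> mu(u) / u\<close> on the derivative.\<close>

lemma mu_diff_lower:
  assumes "0 \<le> u" "u \<le> v"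
  shows "(v - u) * psi_sq a v \<le> v\<^sup>2 * (mu a u - mu a v)"
proof -
  have "(v - u) * psi_sq a v = (\<Sum>i. (v - u) * (2 * v\<^sup>2 / ((a i)\<^sup>2 + 2 * v)\<^sup>2))"
    unfolding psi_sq_def using assms by (intro suminf_mult[symmetric] summable_psi_terms) auto
  also have "\<dots> \<le> (\<Sum>i. v\<^sup>2 * (1 / ((a i)\<^sup>2 + 2 * u) - 1 / ((a i)\<^sup>2 + 2 * v)))"
    using assms a_sq_pos
    by (intro suminf_le mu_term_diff_lower summable_mult summable_diff summable_psi_terms
        summable_mu_terms) auto
  also have "\<dots> = v\<^sup>2 * (mu a u - mu a v)"
    unfolding mu_def using assms
    by (simp add: suminf_mult suminf_diff summable_diff summable_mu_terms)
  finally show ?thesis .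
qed

lemma mu_diff_upper:
  assumes "0 \<le> u" "u \<le> v"
  shows "u * (mu a u - mu a v) \<le> (v - u) * mu a v"
proof -
  have "u * (mu a u - mu a v) = (\<Sum>i. u * (1 / ((a i)\<^sup>2 + 2 * u) - 1 / ((a i)\<^sup>2 + 2 * v)))"
    unfolding mu_def using assms
    by (simp add: suminf_mult suminf_diff summable_diff summable_mu_terms)
  also have "\<dots> \<le> (\<Sum>i. (v - u) * (1 / ((a i)\<^sup>2 + 2 * v)))"
    using assms a_sq_pos
    by (intro suminf_le mu_term_diff_upper summable_mult summable_diff summable_mu_terms) auto
  also have "\<dots> = (v - u) * mu a v"
    unfolding mu_def using assms by (intro suminf_mult summable_mu_terms) auto
  finally show ?thesis .
qed

lemma mu_strict_antimono:
  assumes "0 \<le> u" "u < v"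
  shows "mu a v < mu a u"
proof -
  have "0 < (v - u) * psi_sq a v"
    using assms psi_sq_pos[of v] by simp
  also have "\<dots> \<le> v\<^sup>2 * (mu a u - mu a v)"
    using assms by (intro mu_diff_lower) auto
  finally show ?thesis
    by (simp add: zero_less_mult_iff)
qed

lemma mu_antimono: "0 \<le> u \<Longrightarrow> u \<le> v \<Longrightarrow> mu a v \<le> mu a u"
  using mu_strict_antimono[of u v] by (cases "u = v") auto

lemma psi_sq_mono:
  assumes "0 \<le> u" "u \<le> v"
  shows "psi_sq a u \<le> psi_sq a v"
  unfolding psi_sq_def using assms
  by (intro suminf_le psi_term_mono a_sq_pos summable_psi_terms) auto

lemma psi_sq_ratio:
  assumes "0 < u" "u \<le> v"
  shows "psi_sq a v \<le> (v / u)\<^sup>2 * psi_sq a u"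
proof -
  have "psi_sq a v \<le> (\<Sum>i. (v / u)\<^sup>2 * (2 * u\<^sup>2 / ((a i)\<^sup>2 + 2 * u)\<^sup>2))"
    unfolding psi_sq_def using assms
    by (intro suminf_le psi_term_ratio a_sq_pos summable_psi_terms summable_mult) auto
  also have "\<dots> = (v / u)\<^sup>2 * psi_sq a u"
    unfolding psi_sq_def using assms by (intro suminf_mult summable_psi_terms) auto
  finally show ?thesis .
qed

lemma psi_sq_le_mu:
  assumes "0 \<le> t"
  shows "psi_sq a t \<le> t * mu a t"
proof -
  have "psi_sq a t \<le> (\<Sum>i. t * (1 / ((a i)\<^sup>2 + 2 * t)))"
    unfolding psi_sq_def using assms
    by (intro suminf_le psi_term_le_mu_term a_sq_pos summable_psi_terms summable_mult
        summable_mu_terms)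
  also have "\<dots> = t * mu a t"
    unfolding mu_def using assms by (intro suminf_mult summable_mu_terms)
  finally show ?thesis .
qed

text \<open>\<open>psi_sq\<close> is unbounded: for \<open>t\<close> exceeding \<open>a\<^sub>0\<^sup>2, \<dots>, a\<^sub>N\<^sub>-\<^sub>1\<^sup>2\<close> each of the first
  \<open>N\<close> terms is at least \<open>2/9\<close>.\<close>

lemma psi_sq_unbounded: "\<exists>t>0. B \<le> psi_sq a t"
proof -
  define N where "N = nat \<lceil>9 * B / 2\<rceil>"
  define t where "t = 1 + (\<Sum>i<N. (a i)\<^sup>2)"
  have t: "0 < t"
    unfolding t_def by (simp add: add_pos_nonneg sum_nonneg)
  have term_ge: "2 / 9 \<le> 2 * t\<^sup>2 / ((a i)\<^sup>2 + 2 * t)\<^sup>2" if "i < N" for i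
  proof -
    have "(a i)\<^sup>2 \<le> (\<Sum>i<N. (a i)\<^sup>2)"
      using that by (intro member_le_sum) auto
    then have "((a i)\<^sup>2 + 2 * t)\<^sup>2 \<le> (3 * t)\<^sup>2"
      using t denom_pos[of t i] unfolding t_def by (intro power_mono) auto
    then have "2 * t\<^sup>2 / (3 * t)\<^sup>2 \<le> 2 * t\<^sup>2 / ((a i)\<^sup>2 + 2 * t)\<^sup>2"
      using t denom_pos[of t i] by (intro divide_left_mono) auto
    moreover have "2 * t\<^sup>2 / (3 * t)\<^sup>2 = 2 / 9"
      using t by (simp add: power2_eq_square)
    ultimately show ?thesis by simp
  qed
  have "B \<le> (\<Sum>i<N. 2 / 9 :: real)"
    unfolding N_def by simp linarith
  also have "\<dots> \<le> (\<Sum>i<N. 2 * t\<^sup>2 / ((a i)\<^sup>2 + 2 * t)\<^sup>2)"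
    by (intro sum_mono term_ge) simp
  also have "\<dots> \<le> psi_sq a t"
    unfolding psi_sq_def using t
    by (intro sum_le_suminf summable_psi_terms) (auto simp: denom_pos)
  finally show ?thesis using t by blast
qed

lemma psi_sq_tendsto_at_top: "filterlim (psi_sq a) at_top at_top"
  unfolding filterlim_at_top eventually_at_top_linorder
proof
  fix B
  obtain t0 where "0 < t0" "B \<le> psi_sq a t0"
    using psi_sq_unbounded by blast
  then show "\<exists>t0. \<forall>t\<ge>t0. B \<le> psi_sq a t"
    using psi_sq_mono[of t0] by (meson less_imp_le order_trans)
qed

text \<open>\<open>mu(t) \<rightarrow> 0\<close> as \<open>t \<rightarrow> \<infinity>\<close>, by dominated convergence for series (Tannery's theorem)
  with dominating sequence \<open>1 / a\<^sub>i\<^sup>2\<close>.\<close>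

lemma mu_tendsto_zero: "(mu a \<longlongrightarrow> 0) at_top"
proof -
  have term_lim: "((\<lambda>t. 1 / ((a i)\<^sup>2 + 2 * t)) \<longlongrightarrow> 0) at_top" for i
  proof -
    have "filterlim (\<lambda>t. (a i)\<^sup>2 + 2 * t) at_top at_top"
      by (intro filterlim_tendsto_add_at_top[OF tendsto_const]
          filterlim_tendsto_pos_mult_at_top[OF tendsto_const _ filterlim_ident]) simp
    then show ?thesis
      using tendsto_inverse_0_at_top by (simp add: inverse_eq_divide)
  qed
  have "\<forall>\<^sub>F (i, t) in (at_top :: nat filter) \<times>\<^sub>F at_top. 0 \<le> (t :: real)"
    by (simp add: eventually_prod2)
  then have bound: "\<forall>\<^sub>F (i, t) in at_top \<times>\<^sub>F at_top. norm (1 / ((a i)\<^sup>2 + 2 * t)) \<le> 1 / (a i)\<^sup>2"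
    by (rule eventually_mono) (auto simp: mu_term_le less_imp_le denom_pos)
  have "((\<lambda>t. \<Sum>i. 1 / ((a i)\<^sup>2 + 2 * t)) \<longlongrightarrow> (\<Sum>i. 0)) at_top"
    using tannerys_theorem[OF term_lim bound a_summable] by simp
  then show ?thesis
    unfolding mu_def[abs_def] by simp
qed

text \<open>\<open>mu\<close> is Lipschitz on every half-line \<open>[c, \<infinity>)\<close> with \<open>c > 0\<close>, hence continuous
  there; this is what the intermediate value theorem needs.\<close>

lemma mu_lipschitz:
  assumes "0 < c"
  shows "lipschitz_on (mu a c / c) {c..} (mu a)"
  unfolding lipschitz_on_def
proof (intro conjI ballI)
  have diff_le: "mu a u - mu a v \<le> mu a c / c * (v - u)" if "c \<le> u" "u \<le> v" for u v
  proof -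
    have "u * (mu a u - mu a v) \<le> (v - u) * mu a v"
      using assms that by (intro mu_diff_upper) auto
    also have "\<dots> \<le> (v - u) * mu a c"
      using assms that by (intro mult_left_mono mu_antimono) auto
    finally have "mu a u - mu a v \<le> (v - u) * mu a c / u"
      using assms that by (simp add: field_simps)
    also have "\<dots> \<le> (v - u) * mu a c / c"
      using assms that mu_pos[of c] by (intro divide_left_mono) auto
    finally show ?thesis by (simp add: mult.commute)
  qed
  show "0 \<le> mu a c / c"
    using assms mu_pos[of c] by simp
  fix u v assume "u \<in> {c..}" "v \<in> {c..}"
  then show "dist (mu a u) (mu a v) \<le> mu a c / c * dist u v"
    using assms diff_le[of u v] diff_le[of v u] mu_antimono[of u v] mu_antimono[of v u]
    by (cases "u \<le> v") (auto simp: dist_real_def)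
qed

lemma mu_attains:
  assumes "0 < c" "0 < s" "s < mu a c"
  shows "\<exists>t\<ge>c. mu a t = s"
proof -
  have "\<forall>\<^sub>F t in at_top. c \<le> t \<and> mu a t < s"
    using eventually_ge_at_top order_tendstoD(2)[OF mu_tendsto_zero assms(2)]
    by (rule eventually_conj)
  then obtain b where b: "c \<le> b" "mu a b < s"
    by (auto simp: eventually_at_top_linorder)
  have "continuous_on {c..b} (mu a)"
    using lipschitz_on_continuous_on[OF mu_lipschitz[OF assms(1)]] by (rule continuous_on_subset) auto
  then show ?thesis
    using IVT2'[of "mu a" b s c] b assms by (auto intro: less_imp_le)
qed

lemma mu_inv:
  assumes "0 < s" "s < mu a 1"
  shows "0 < mu_inv a s" "mu a (mu_inv a s) = s"
proof -
  have s: "s \<in> mu a ` {0<..}"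
    using mu_attains[of 1 s] assms by force
  show "0 < mu_inv a s" "mu a (mu_inv a s) = s"
    using inv_into_into[OF s] f_inv_into_f[OF s] unfolding mu_inv_def by auto
qed

lemma mu_inv_tendsto_at_top: "filterlim (mu_inv a) at_top (at_right 0)"
  unfolding filterlim_at_top
proof
  fix Z :: real
  define B where "B = max Z 1"
  have "0 < mu a B" "mu a B \<le> mu a 1"
    unfolding B_def by (auto intro: mu_pos mu_antimono)
  then have "\<forall>\<^sub>F s in at_right 0. 0 < s \<and> s < mu a B"
    using eventually_at_right_real[of 0 "mu a B"] by simp
  then show "\<forall>\<^sub>F s in at_right 0. Z \<le> mu_inv a s"
  proof (rule eventually_mono)
    fix s assume s: "0 < s \<and> s < mu a B"
    then have "mu a (mu_inv a s) < mu a B" "0 < mu_inv a s"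
      using mu_inv[of s] \<open>mu a B \<le> mu a 1\<close> by auto
    then have "B < mu_inv a s"
      using mu_antimono[of "mu_inv a s" B] by (cases "B < mu_inv a s") auto
    then show "Z \<le> mu_inv a s"
      unfolding B_def by simp
  qed
qed

text \<open>Comparing first with \<open>w = min v (2u)\<close> rules out \<open>v \<ge> 2u\<close>.\<close>

lemma mu_gap_bound:
  assumes "0 < u" "u \<le> v" and small: "4 * u * (mu a u - mu a v) < psi_sq a u"
  shows "(v - u) * psi_sq a u \<le> 4 * u\<^sup>2 * (mu a u - mu a v)"
proof -
  define w where "w = min v (2 * u)"
  have w: "u \<le> w" "w \<le> v" "w \<le> 2 * u"
    using assms unfolding w_def by auto
  have "(w - u) * psi_sq a u \<le> (w - u) * psi_sq a w"
    using assms w by (intro mult_left_mono psi_sq_mono) auto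
  also have "\<dots> \<le> w\<^sup>2 * (mu a u - mu a w)"
    using assms w by (intro mu_diff_lower) auto
  also have "\<dots> \<le> (2 * u)\<^sup>2 * (mu a u - mu a v)"
    using assms w mu_antimono[of u w] mu_antimono[of w v]
    by (intro mult_mono power_mono) auto
  finally have gap: "(w - u) * psi_sq a u \<le> 4 * u\<^sup>2 * (mu a u - mu a v)"
    by (simp add: power_mult_distrib)
  also have "\<dots> = u * (4 * u * (mu a u - mu a v))"
    by (simp add: power2_eq_square)
  also have "\<dots> < u * psi_sq a u"
    using assms small by simp
  finally have "w < 2 * u"
    using psi_sq_pos[OF assms(1)] by (simp add: mult_less_cancel_right)
  then have "w = v"
    unfolding w_def by simp
  then show ?thesis
    using gap by simp
qed

lemma psi_mono_ratio:
  assumes "0 < u" "u \<le> v"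
  shows "psi a u \<le> psi a v" "psi a v \<le> v / u * psi a u"
proof -
  show "psi a u \<le> psi a v"
    unfolding psi_eq_sqrt_psi_sq using assms by (simp add: psi_sq_mono)
  have "psi a v \<le> sqrt ((v / u)\<^sup>2 * psi_sq a u)"
    unfolding psi_eq_sqrt_psi_sq using assms by (simp add: psi_sq_ratio)
  also have "\<dots> = v / u * psi a u"
    unfolding psi_eq_sqrt_psi_sq using assms by (simp add: real_sqrt_mult)
  finally show "psi a v \<le> v / u * psi a u" .
qed

lemma psi_ratio_close:
  assumes "0 < u" "0 < v" "u \<le> (1 + \<epsilon>) * v" "v \<le> (1 + \<epsilon>) * u"
  shows "\<bar>psi a u / psi a v - 1\<bar> \<le> \<epsilon>"
proof -
  have pos: "0 < psi a u" "0 < psi a v"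
    unfolding psi_eq_sqrt_psi_sq using assms psi_sq_pos by auto
  have "(u + v) * 1 \<le> (u + v) * (1 + \<epsilon>)"
    using assms by (simp add: algebra_simps)
  then have "0 \<le> \<epsilon>"
    using assms by (simp add: mult_le_cancel_left_pos)
  show ?thesis
  proof (cases "u \<le> v")
    case True
    have "psi a v \<le> v / u * psi a u"
      using assms True by (intro psi_mono_ratio)
    also have "\<dots> \<le> (1 + \<epsilon>) * psi a u"
      using assms pos by (intro mult_right_mono) (auto simp: divide_le_eq)
    also have "\<dots> \<le> psi a u + \<epsilon> * psi a v"
      using psi_mono_ratio(1)[OF assms(1) True] \<open>0 \<le> \<epsilon>\<close>
      by (simp add: algebra_simps mult_left_mono)
    finally have "psi a v - psi a u \<le> \<epsilon> * psi a v"
      by simp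
    then show ?thesis
      using pos psi_mono_ratio(1)[OF assms(1) True] by (simp add: field_simps abs_le_iff)
  next
    case False
    have "psi a u \<le> u / v * psi a v"
      using assms False by (intro psi_mono_ratio) auto
    also have "\<dots> \<le> (1 + \<epsilon>) * psi a v"
      using assms pos by (intro mult_right_mono) (auto simp: divide_le_eq)
    finally show ?thesis
      using pos psi_mono_ratio(1)[of v u] assms False by (simp add: field_simps abs_le_iff)
  qed
qed

lemma shifted_ratio:
  assumes T: "0 < T" "0 < T'" and shift: "mu a T' = mu a T + x / T"
    and large: "8 * \<bar>x\<bar> < psi_sq a T"
  shows "\<bar>psi a T / psi a T' - 1\<bar> \<le> 4 * \<bar>x\<bar> / psi_sq a T"
proof -
  define \<delta> where "\<delta> = \<bar>x\<bar> / psi_sq a T"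
  have P: "0 < psi_sq a T"
    using psi_sq_pos[OF T(1)] .
  have \<delta>: "0 \<le> \<delta>" "\<delta> < 1 / 8"
    unfolding \<delta>_def using P large by (auto simp: divide_less_eq)
  have "T \<le> (1 + 4 * \<delta>) * T' \<and> T' \<le> (1 + 4 * \<delta>) * T"
  proof (cases "0 \<le> x")
    case True
    then have "T' \<le> T"
      using shift T mu_strict_antimono[of T T'] by (cases "T' \<le> T") (auto simp: not_le divide_less_0_iff)
    have "(T - T') * psi_sq a T \<le> T\<^sup>2 * (x / T)"
      using mu_diff_lower[of T' T] shift T \<open>T' \<le> T\<close> by simp
    also have "\<dots> = T * \<bar>x\<bar>"
      using T True by (simp add: power2_eq_square)
    finally have "T - T' \<le> \<delta> * T"
      unfolding \<delta>_def using P by (simp add: field_simps)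
    then have "(1 - \<delta>) * T \<le> T'"
      by (simp add: algebra_simps)
    have "1 \<le> (1 + 4 * \<delta>) * (1 - \<delta>)"
    proof -
      have "0 \<le> \<delta> * (3 - 4 * \<delta>)"
        using \<delta> by simp
      then show ?thesis
        by (simp add: algebra_simps)
    qed
    then have "T \<le> (1 + 4 * \<delta>) * ((1 - \<delta>) * T)"
      using T by (simp add: mult.assoc[symmetric])
    also have "\<dots> \<le> (1 + 4 * \<delta>) * T'"
      using \<delta> \<open>(1 - \<delta>) * T \<le> T'\<close> by (intro mult_left_mono) auto
    finally have "T \<le> (1 + 4 * \<delta>) * T'" .
    moreover have "0 \<le> \<delta> * T"
      using \<delta> T by simp
    ultimately show ?thesis
      using \<open>T' \<le> T\<close> by (simp add: algebra_simps)
  next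
    case False
    then have "T \<le> T'"
      using shift T mu_strict_antimono[of T' T] by (cases "T \<le> T'") (auto simp: not_le zero_less_divide_iff)
    have diff: "mu a T - mu a T' = \<bar>x\<bar> / T"
      using shift False by simp
    have "(T' - T) * psi_sq a T \<le> 4 * T\<^sup>2 * (\<bar>x\<bar> / T)"
      using mu_gap_bound[of T T'] T \<open>T \<le> T'\<close> large diff by simp
    also have "\<dots> = 4 * T * \<bar>x\<bar>"
      using T by (simp add: power2_eq_square)
    finally have "T' - T \<le> 4 * \<delta> * T"
      unfolding \<delta>_def using P by (simp add: field_simps)
    moreover have "0 \<le> \<delta> * T'"
      using \<delta> T by simp
    ultimately show ?thesis
      using \<open>T \<le> T'\<close> by (simp add: algebra_simps)
  qed
  then show ?thesis
    using psi_ratio_close[OF T] unfolding \<delta>_def by simp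
qed

lemma psi_sq_mu_inv_tendsto_at_top:
  "filterlim (\<lambda>s. psi_sq a (mu_inv a s)) at_top (at_right 0)"
  by (rule filterlim_compose[OF psi_sq_tendsto_at_top mu_inv_tendsto_at_top])

text \<open>For small \<open>s > 0\<close> both \<open>s\<close> and the shifted point \<open>s + x \<rho>(s) = s + x / T\<close> lie in
  \<open>(0, mu(1))\<close>, and the key estimate applies.\<close>

lemma eventually_shifted_ratio:
  "\<forall>\<^sub>F s in at_right 0. \<bar>psi a (mu_inv a s) / psi a (mu_inv a (s + x * rho a s)) - 1\<bar>
      \<le> 4 * \<bar>x\<bar> / psi_sq a (mu_inv a s)"
proof -
  have "\<forall>\<^sub>F s in at_right 0. 0 < s \<and> s < mu a 1 / 2"
    using eventually_at_right_real[of 0 "mu a 1 / 2"] mu_pos[of 1] by simp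
  moreover have "\<forall>\<^sub>F s in at_right 0. \<bar>x\<bar> / mu_inv a s < mu a 1 / 2"
  proof (rule order_tendstoD(2))
    show "((\<lambda>s. \<bar>x\<bar> / mu_inv a s) \<longlongrightarrow> 0) (at_right 0)"
      by (intro tendsto_divide_0[OF tendsto_const] filterlim_at_top_imp_at_infinity
          mu_inv_tendsto_at_top)
  qed (use mu_pos[of 1] in simp)
  moreover have "\<forall>\<^sub>F s in at_right 0. 8 * \<bar>x\<bar> < psi_sq a (mu_inv a s)"
    using psi_sq_mu_inv_tendsto_at_top by (simp add: filterlim_at_top_dense)
  ultimately show ?thesis
  proof eventually_elim
    case (elim s)
    define T where "T = mu_inv a s"
    define T' where "T' = mu_inv a (s + x / T)"
    have T: "0 < T" "mu a T = s"
      unfolding T_def using mu_inv[of s] elim by auto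
    have "\<bar>x\<bar> < T * mu a T"
      using elim psi_sq_le_mu[of T] T unfolding T_def by auto
    then have "\<bar>x / T\<bar> < s"
      using T by (simp add: divide_less_eq mult.commute)
    moreover have "\<bar>x / T\<bar> < mu a 1 / 2"
      using elim T unfolding T_def by simp
    moreover have "s < mu a 1 / 2"
      using elim by simp
    ultimately have "0 < s + x / T" "s + x / T < mu a 1"
      using abs_ge_self[of "x / T"] abs_ge_minus_self[of "x / T"] by linarith+
    then have T': "0 < T'" "mu a T' = mu a T + x / T"
      unfolding T'_def using mu_inv[of "s + x / T"] T by auto
    show ?case
      using shifted_ratio[OF T(1) T'] elim unfolding T_def T'_def rho_def by simp
  qed
qed

end

theorem mainTheorem12:
  fixes a :: "nat \<Rightarrow> real" and x :: real
  assumes "mono a"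
    and "\<And>i. a i > 0"
    and "summable (\<lambda>i. 1 / (a i)\<^sup>2)"
  shows "((\<lambda>s. psi a (mu_inv a s) / psi a (mu_inv a (s + x * rho a s)))
            \<longlongrightarrow> 1) (at_right 0)"
proof (rule LIM_zero_cancel, rule Lim_null_comparison)
  show "\<forall>\<^sub>F s in at_right 0. norm (psi a (mu_inv a s) / psi a (mu_inv a (s + x * rho a s)) - 1)
      \<le> 4 * \<bar>x\<bar> / psi_sq a (mu_inv a s)"
    using eventually_shifted_ratio[OF assms(2,3)] by simp
  show "((\<lambda>s. 4 * \<bar>x\<bar> / psi_sq a (mu_inv a s)) \<longlongrightarrow> 0) (at_right 0)"
    by (intro tendsto_divide_0[OF tendsto_const] filterlim_at_top_imp_at_infinity
        psi_sq_mu_inv_tendsto_at_top[OF assms(2,3)])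
qed

end
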